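(* Let $n\ge 2$, let $\mathcal{L}\subset\mathbb{R}^n$ be a tame lattice with Lagrangian basis $\{\mathbf{e}_1,\dots,\mathbf{e}_n\}$, $\mathbf{v}_1=\sum_i\mathbf{e}_i$, $a:=\langle\mathbf{e}_1,\mathbf{e}_1\rangle$, $h:=-\langle\mathbf{e}_1,\mathbf{e}_2\rangle$. Let $r,s$ be integers with $0\ne|r|<n$ and suppose $s=rh$. Then the dual lattice of $\mathcal{L}_{\mathbf{v}_1}^{(r,s)}$ equals $\frac{1}{r(a+h)}\mathcal{L}$.
   Context: Tame lattice: a full-rank lattice $\mathcal{L}\subset\mathbb{R}^n$ with a basis $\{\mathbf{e}_1,\dots,\mathbf{e}_n\}$ (Lagrangian basis) and nonzero $\mathbf{v}_1\in\mathcal{L}\cap\mathcal{L}^*$ such that $\sum_i\mathbf{e}_i=\mathbf{v}_1$, $\langle\mathbf{e}_i,\mathbf{v}_1\rangle=1$, $\langle\mathbf{e}_i,\mathbf{e}_i\rangle=a$, $\langle\mathbf{e}_i,\mathbf{e}_j\rangle=-h$ ($i\ne j$); then $a-h(n-1)=1$ and $a+h>0$. $\mathcal{L}^{(r,s)}_{\mathbf{v}_1}$ is the image of $\mathcal{L}$ under $\mathbf{x}\mapsto r\mathbf{x}+s\langle\mathbf{x},\mathbf{v}_1\rangle\mathbf{v}_1$. The dual of a lattice $\Lambda\subset\mathbb{R}^n$ is $\Lambda^*=\{\mathbf{v}:\langle\mathbf{v},\mathbf{x}\rangle\in\mathbb{Z}\ \forall\mathbf{x}\in\Lambda\}$. 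*)

theory Defs
  imports "HOL-Analysis.Analysis"
begin

definition lattice_gen :: "('n::finite \<Rightarrow> real^'n) \<Rightarrow> (real^'n) set" where
  "lattice_gen e = {x. \<exists>c. (\<forall>i. c i \<in> \<int>) \<and> x = (\<Sum>i\<in>UNIV. c i *\<^sub>R e i)}"

definition dual_lattice :: "(real^'n) set \<Rightarrow> (real^'n) set" where
  "dual_lattice \<Lambda> = {v. \<forall>x\<in>\<Lambda>. inner v x \<in> \<int>}"

definition tame_lagrangian_basis :: "('n::finite \<Rightarrow> real^'n) \<Rightarrow> real \<Rightarrow> real \<Rightarrow> bool" where
  "tame_lagrangian_basis e a h \<longleftrightarrow>
     inj e \<and> independent (range e) \<and>
     (let v1 = (\<Sum>i\<in>UNIV. e i) in
        v1 \<noteq> 0 \<and> v1 \<in> lattice_gen e \<and> v1 \<in> dual_lattice (lattice_gen e) \<and>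
        (\<forall>i. inner (e i) v1 = 1) \<and>
        (\<forall>i. inner (e i) (e i) = a) \<and>
        (\<forall>i j. i \<noteq> j \<longrightarrow> inner (e i) (e j) = - h))"

definition rs_map :: "real \<Rightarrow> real \<Rightarrow> real^'n \<Rightarrow> real^'n \<Rightarrow> real^'n" where
  "rs_map r s v1 x = r *\<^sub>R x + (s * inner x v1) *\<^sub>R v1"

end

theory Submission imports Defs begin

(* Since s = r h, T x = r x + s <x, v1> v1 sends the Lagrangian basis to a family with
   <e j, T (e i)> = r (a + h) if i = j and 0 otherwise: the off-diagonal Gram entries -h are
   cancelled by s <e j, v1> = r h. So T o e and e / (r (a + h)) are dual bases, and the dual
   of the lattice generated by one is the lattice generated by the other. *)

lemma lattice_gen_image_linear:
  fixes e :: "'n::finite \<Rightarrow> real^'n"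
  assumes "linear T"
  shows "T ` lattice_gen e = lattice_gen (T \<circ> e)"
proof -
  have lattice_gen_eq: "lattice_gen f = (\<lambda>c. \<Sum>i\<in>UNIV. c i *\<^sub>R f i) ` {c. \<forall>i. c i \<in> \<int>}"
    for f :: "'n \<Rightarrow> real^'n"
    unfolding lattice_gen_def by auto
  show ?thesis
    unfolding lattice_gen_eq image_image
    by (simp add: linear_sum[OF assms] linear_cmul[OF assms])
qed

lemma lattice_gen_basis_mem: "e i \<in> lattice_gen e"
  unfolding lattice_gen_def
  by (rule CollectI, rule exI[of _ "\<lambda>j. if j = i then 1 else 0"])
     (simp add: if_distrib[of "\<lambda>t. t *\<^sub>R _"] cong: if_cong)

lemma span_range_eq_UNIV:
  fixes e :: "'n::finite \<Rightarrow> real^'n"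
  assumes "inj e" "independent (range e)"
  shows "span (range e) = UNIV"
proof -
  have "card (range e) = dim (UNIV :: (real^'n) set)"
    using assms(1) by (simp add: card_image)
  thus ?thesis using card_eq_dim[of "range e" UNIV] assms(2) by auto
qed

lemma sum_basis_representation:
  fixes e :: "'n::finite \<Rightarrow> real^'n"
  assumes inj: "inj e" and "span (range e) = UNIV"
  obtains u where "y = (\<Sum>i\<in>UNIV. u i *\<^sub>R e i)"
proof -
  have "y \<in> span (range e)" using assms by simp
  then obtain u where "(\<Sum>v\<in>range e. u v *\<^sub>R v) = y"
    by (auto simp: span_finite)
  moreover have "(\<Sum>v\<in>range e. u v *\<^sub>R v) = (\<Sum>i\<in>UNIV. u (e i) *\<^sub>R e i)"
    by (simp add: sum.reindex[OF inj])
  ultimately show thesis using that by metis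
qed

lemma dual_lattice_gen_biorthogonal:
  fixes e f :: "'n::finite \<Rightarrow> real^'n"
  assumes inj: "inj e" and span: "span (range e) = UNIV"
    and biorth: "\<And>i j. inner (e j) (f i) = (if i = j then k else 0)"
    and "k \<noteq> 0"
  shows "dual_lattice (lattice_gen f) = (\<lambda>x. (1 / k) *\<^sub>R x) ` lattice_gen e"
proof -
  have inner_f: "inner (\<Sum>j\<in>UNIV. u j *\<^sub>R e j) (f i) = k * u i" for u i
    by (simp add: inner_sum_left biorth if_distrib cong: if_cong)
  show ?thesis
  proof
    show "dual_lattice (lattice_gen f) \<subseteq> (\<lambda>x. (1 / k) *\<^sub>R x) ` lattice_gen e"
    proof
      fix y assume y: "y \<in> dual_lattice (lattice_gen f)"
      obtain u where u: "y = (\<Sum>i\<in>UNIV. u i *\<^sub>R e i)"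
        using sum_basis_representation[OF inj span] by blast
      have "k * u i \<in> \<int>" for i
        using y lattice_gen_basis_mem[of f i] inner_f[of u i]
        unfolding dual_lattice_def u by auto
      hence "(\<Sum>i\<in>UNIV. (k * u i) *\<^sub>R e i) \<in> lattice_gen e"
        unfolding lattice_gen_def by (intro CollectI exI[of _ "\<lambda>i. k * u i"]) auto
      moreover have "y = (1 / k) *\<^sub>R (\<Sum>i\<in>UNIV. (k * u i) *\<^sub>R e i)"
        using \<open>k \<noteq> 0\<close> u by (simp add: scaleR_sum_right)
      ultimately show "y \<in> (\<lambda>x. (1 / k) *\<^sub>R x) ` lattice_gen e" by blast
    qed
    show "(\<lambda>x. (1 / k) *\<^sub>R x) ` lattice_gen e \<subseteq> dual_lattice (lattice_gen f)"
    proof (intro subsetI, unfold dual_lattice_def, intro CollectI ballI)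
      fix z x assume "z \<in> (\<lambda>x. (1 / k) *\<^sub>R x) ` lattice_gen e" "x \<in> lattice_gen f"
      then obtain d c where d: "\<forall>i. d i \<in> \<int>" "z = (1 / k) *\<^sub>R (\<Sum>i\<in>UNIV. d i *\<^sub>R e i)"
        and c: "\<forall>i. c i \<in> \<int>" "x = (\<Sum>i\<in>UNIV. c i *\<^sub>R f i)"
        unfolding lattice_gen_def by blast
      have "inner z x = (\<Sum>i\<in>UNIV. c i * ((1 / k) * (k * d i)))"
        unfolding c(2) d(2) by (simp add: inner_sum_right inner_f)
      also have "\<dots> = (\<Sum>i\<in>UNIV. c i * d i)" using \<open>k \<noteq> 0\<close> by simp
      also have "\<dots> \<in> \<int>" using c d by (intro Ints_sum Ints_mult) auto
      finally show "inner z x \<in> \<int>" .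
    qed
  qed
qed

lemma linear_rs_map: "linear (rs_map r s v)"
  by (rule linearI) (simp_all add: rs_map_def inner_add_left algebra_simps)

lemma tame_lagrangian_basis_a_plus_h_pos:
  fixes e :: "'n::finite \<Rightarrow> real^'n"
  assumes "CARD('n) \<ge> 2" and "tame_lagrangian_basis e a h"
  shows "a + h > 0"
proof -
  obtain i j :: 'n where "i \<noteq> j"
    using assms(1) card_le_Suc0_iff_eq[of "UNIV :: 'n set"] by fastforce
  have "0 < inner (e i - e j) (e i - e j)"
    using assms(2) \<open>i \<noteq> j\<close> by (simp add: tame_lagrangian_basis_def inj_eq)
  also have "\<dots> = 2 * (a + h)"
    using assms(2) \<open>i \<noteq> j\<close>
    by (simp add: tame_lagrangian_basis_def inner_diff_left inner_diff_right inner_commute)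
  finally show ?thesis by simp
qed

lemma inner_tame_rs_map:
  fixes e :: "'n::finite \<Rightarrow> real^'n"
  assumes "tame_lagrangian_basis e a h"
  shows "inner (e j) (rs_map r (r * h) (\<Sum>i\<in>UNIV. e i) (e i)) = (if i = j then r * (a + h) else 0)"
  using assms
  by (auto simp: tame_lagrangian_basis_def Let_def rs_map_def inner_add_right algebra_simps)

theorem mainTheorem9:
  fixes e :: "'n::finite \<Rightarrow> real^'n" and a h :: real and r s :: int
  assumes "CARD('n) \<ge> 2"
    and "tame_lagrangian_basis e a h"
    and "r \<noteq> 0" and "\<bar>r\<bar> < int CARD('n)"
    and "real_of_int s = real_of_int r * h"
  shows "dual_lattice (rs_map (real_of_int r) (real_of_int s) (\<Sum>i\<in>UNIV. e i) ` lattice_gen e)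
         = (\<lambda>x. (1 / (real_of_int r * (a + h))) *\<^sub>R x) ` lattice_gen e"
proof -
  define T where "T = rs_map (real_of_int r) (real_of_int s) (\<Sum>i\<in>UNIV. e i)"
  have inj: "inj e" and span: "span (range e) = UNIV"
    using assms(2) span_range_eq_UNIV by (auto simp: tame_lagrangian_basis_def)
  have "real_of_int r * (a + h) \<noteq> 0"
    using assms(3) tame_lagrangian_basis_a_plus_h_pos[OF assms(1,2)] by simp
  moreover have "inner (e j) ((T \<circ> e) i) = (if i = j then real_of_int r * (a + h) else 0)" for i j
    unfolding T_def assms(5) using inner_tame_rs_map[OF assms(2)] by simp
  ultimately have "dual_lattice (lattice_gen (T \<circ> e)) = (\<lambda>x. (1 / (real_of_int r * (a + h))) *\<^sub>R x) ` lattice_gen e"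
    using dual_lattice_gen_biorthogonal[OF inj span] by blast
  thus ?thesis
    unfolding T_def lattice_gen_image_linear[OF linear_rs_map] .
qed

end
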